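(* Let $n\in\mathbb{N}$, $a<b$, and let $f:[a,b]\to\mathbb{R}$ be $2n$-convex. If $x_1,\dots,x_n\in(a,b)$ and $x_{n+1}=b$, then there exists a polynomial $p\in\Pi_{2n}$ such that $p(x_i)=f(x_i)$ for $i=1,\dots,n+1$ and $p(x)\ge f(x)$ for all $x\in[a,b]$.
   Context: $\Pi_m$ denotes the set of real polynomials of degree at most $m$. Divided differences are defined recursively by $[x_1;f]:=f(x_1)$ and $[x_1,\dots,x_{m+1};f]:=\frac{[x_2,\dots,x_{m+1};f]-[x_1,\dots,x_m;f]}{x_{m+1}-x_1}$ for pairwise distinct points. For $m\in\mathbb{N}$, a function $f$ on an interval $I$ is called $m$-convex if $[x_1,\dots,x_{m+2};f]\ge 0$ for all pairwise distinct $x_1,\dots,x_{m+2}\in I$. *)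

theory Defs
  imports Complex_Main "HOL-Computational_Algebra.Polynomial"
begin

text \<open>The empty list is given the (irrelevant) value 0.\<close>
fun divdiff :: "real list \<Rightarrow> (real \<Rightarrow> real) \<Rightarrow> real" where
  "divdiff [] f = 0"
| "divdiff [x] f = f x"
| "divdiff (x # y # zs) f =
     (divdiff (y # zs) f - divdiff (butlast (x # y # zs)) f) / (last (y # zs) - x)"

definition m_convex :: "nat \<Rightarrow> real set \<Rightarrow> (real \<Rightarrow> real) \<Rightarrow> bool" where
  "m_convex m I f \<longleftrightarrow>
     (\<forall>xs. length xs = m + 2 \<and> distinct xs \<and> set xs \<subseteq> I \<longrightarrow> divdiff xs f \<ge> 0)"

end

theory Submission
  imports Defs "HOL-Analysis.Analysis"
begin

text \<open>Put G t = (f t - f b) / (t - b). Its divided differences with 2n+1 nodes in [a,b) are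
  divided differences of f with 2n+2 nodes (b added), hence nonnegative. By induction on k, a
  function whose divided differences with 2k+1 nodes are nonnegative on S has a polynomial
  minorant of degree < 2k touching it at any k interior points of S: at such a point x, dividing
  twice by t - x lowers the number of nodes by two, provided the first quotient is redefined at x
  by its right limit v (which exists because divided differences are monotone in each node), and
  a minorant R of the second quotient gives the minorant G x + (t - x) (v + (t - x) R t).
  Finally p = f b + (t - b) P lies above f on [a,b] because t - b \<le> 0.\<close>

text \<open>Lagrange form of the divided difference; being symmetric in the nodes, it lets the nodes
  be handled as a set.\<close>

definition divdiff_set :: "real set \<Rightarrow> (real \<Rightarrow> real) \<Rightarrow> real" where
  "divdiff_set A f = (\<Sum>a\<in>A. f a / (\<Prod>b\<in>A - {a}. a - b))"

lemma divdiff_set_cong: "(\<And>a. a \<in> A \<Longrightarrow> f a = g a) \<Longrightarrow> divdiff_set A f = divdiff_set A g"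
  unfolding divdiff_set_def by (rule sum.cong) auto

lemma divdiff_set_singleton [simp]: "divdiff_set {a} f = f a"
  unfolding divdiff_set_def by simp

lemma divdiff_set_diff: "divdiff_set A (\<lambda>t. f t - g t) = divdiff_set A f - divdiff_set A g"
  unfolding divdiff_set_def by (simp add: diff_divide_distrib sum_subtractf)

lemma divdiff_set_divide: "divdiff_set A (\<lambda>t. f t / c) = divdiff_set A f / c"
  unfolding divdiff_set_def by (simp add: sum_divide_distrib mult.commute)

lemma divdiff_set_mult: "divdiff_set A (\<lambda>t. c * f t) = c * divdiff_set A f"
  unfolding divdiff_set_def by (simp add: sum_distrib_left)

lemma tendsto_divdiff_set:
  assumes "\<And>t. t \<in> A \<Longrightarrow> ((\<lambda>s. g s t) \<longlongrightarrow> g0 t) F"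
  shows "((\<lambda>s. divdiff_set A (g s)) \<longlongrightarrow> divdiff_set A g0) F"
  unfolding divdiff_set_def divide_inverse by (intro tendsto_sum tendsto_mult_right assms)

lemma divdiff_set_insert:
  assumes "finite T" "s \<notin> T"
  shows "divdiff_set (insert s T) f = f s / (\<Prod>t\<in>T. s - t) + divdiff_set T (\<lambda>t. f t / (t - s))"
proof -
  have "(\<Prod>u\<in>insert s T - {t}. t - u) = (t - s) * (\<Prod>u\<in>T - {t}. t - u)" if "t \<in> T" for t
  proof -
    have "insert s T - {t} = insert s (T - {t})" using that assms by auto
    then show ?thesis using assms by simp
  qed
  then have "(\<Sum>t\<in>T. f t / (\<Prod>u\<in>insert s T - {t}. t - u)) = divdiff_set T (\<lambda>t. f t / (t - s))"
    unfolding divdiff_set_def by (intro sum.cong) (simp_all add: divide_divide_eq_left mult.commute)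
  moreover have "insert s T - {s} = T" using assms by auto
  ultimately show ?thesis using assms by (simp add: divdiff_set_def)
qed

lemma divdiff_set_insert_insert:
  assumes "finite B" "x \<notin> B" "z \<notin> B" "x \<noteq> z"
  shows "divdiff_set (insert x (insert z B)) f
           = (divdiff_set (insert z B) f - divdiff_set (insert x B) f) / (z - x)"
proof -
  define wx wz where "wx = (\<Prod>t\<in>B. x - t)" and "wz = (\<Prod>t\<in>B. z - t)"
  have "wx \<noteq> 0" "wz \<noteq> 0" using assms by (simp_all add: wx_def wz_def prod_zero_iff)
  have "divdiff_set B (\<lambda>t. f t / (t - x) / (t - z))
          = divdiff_set B (\<lambda>t. (f t / (t - z) - f t / (t - x)) / (z - x))"
    using assms by (intro divdiff_set_cong) (auto simp: divide_simps, simp add: algebra_simps)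
  then have rest: "divdiff_set B (\<lambda>t. f t / (t - x) / (t - z))
          = (divdiff_set B (\<lambda>t. f t / (t - z)) - divdiff_set B (\<lambda>t. f t / (t - x))) / (z - x)"
    by (simp add: divdiff_set_divide divdiff_set_diff)
  have "divdiff_set (insert x (insert z B)) f
          = f x / ((x - z) * wx) + (f z / (z - x) / wz + divdiff_set B (\<lambda>t. f t / (t - x) / (t - z)))"
    using assms by (simp add: divdiff_set_insert wx_def wz_def)
  also have "\<dots> = ((f z / wz + divdiff_set B (\<lambda>t. f t / (t - z)))
                     - (f x / wx + divdiff_set B (\<lambda>t. f t / (t - x)))) / (z - x)"
    unfolding rest using \<open>wx \<noteq> 0\<close> \<open>wz \<noteq> 0\<close> assms(4)
    by (simp add: divide_simps) (simp add: algebra_simps)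
  finally show ?thesis using assms by (simp add: divdiff_set_insert wx_def wz_def)
qed

lemma divdiff_eq_divdiff_set: "distinct xs \<Longrightarrow> xs \<noteq> [] \<Longrightarrow> divdiff xs f = divdiff_set (set xs) f"
proof (induction xs f rule: divdiff.induct)
  case (3 x y zs f)
  define z B where "z = last (y # zs)" and "B = set (butlast (y # zs))"
  have yzs: "y # zs = butlast (y # zs) @ [z]" unfolding z_def by simp
  then have "distinct (butlast (y # zs) @ [z])" using "3.prems"(1) by (metis distinct.simps(2))
  then have "z \<notin> B" unfolding B_def by simp
  have set_yzs: "set (y # zs) = insert z B" unfolding B_def by (subst yzs) auto
  then have "x \<notin> B" "x \<noteq> z" using "3.prems"(1) by auto
  have "divdiff (y # zs) f = divdiff_set (insert z B) f"
    using "3.IH"(1) "3.prems"(1) set_yzs by simp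
  moreover have "divdiff (butlast (x # y # zs)) f = divdiff_set (insert x B) f"
    using "3.IH"(2) "3.prems"(1) distinct_butlast[of "x # y # zs"] unfolding B_def by simp
  ultimately have "divdiff (x # y # zs) f = divdiff_set (insert x (insert z B)) f"
    using divdiff_set_insert_insert[of B x z f] \<open>x \<notin> B\<close> \<open>z \<notin> B\<close> \<open>x \<noteq> z\<close>
    unfolding B_def z_def by simp
  then show ?case using set_yzs by simp
qed auto

lemma divdiff_set_const:
  assumes "finite A" "2 \<le> card A"
  shows "divdiff_set A (\<lambda>_. c) = 0"
proof -
  have "divdiff_set (insert x (insert z B)) (\<lambda>_. c) = 0"
    if "finite B" "x \<notin> B" "z \<notin> B" "x \<noteq> z" for x z B
    using that
  proof (induction B arbitrary: x z rule: finite_induct)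
    case empty
    then show ?case using divdiff_set_insert_insert[of "{}" x z] by simp
  next
    case (insert b B)
    then show ?case
      using divdiff_set_insert_insert[of "insert b B" x z] by simp
  qed
  moreover obtain x z B where "A = insert x (insert z B)" "x \<notin> insert z B" "z \<notin> B"
    using assms(2) by (auto simp: numeral_2_eq_2 card_le_Suc_iff)
  ultimately show ?thesis using assms(1) by auto
qed

lemma divdiff_set_difference_quotient:
  assumes "finite A" "A \<noteq> {}" "c \<notin> A"
  shows "divdiff_set A (\<lambda>t. (f t - f c) / (t - c)) = divdiff_set (insert c A) f"
proof -
  have "divdiff_set (insert c A) (\<lambda>_. 1) = 0"
    using assms by (intro divdiff_set_const) (auto simp: card_insert_if Suc_le_eq card_gt_0_iff)
  then have "divdiff_set A (\<lambda>t. 1 / (t - c)) = - 1 / (\<Prod>t\<in>A. c - t)"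
    using assms by (simp add: divdiff_set_insert)
  then have "divdiff_set A (\<lambda>t. (f t - f c) / (t - c))
               = divdiff_set A (\<lambda>t. f t / (t - c)) + f c / (\<Prod>t\<in>A. c - t)"
    using divdiff_set_mult[of A "f c" "\<lambda>t. 1 / (t - c)"]
    by (simp add: diff_divide_distrib divdiff_set_diff)
  then show ?thesis using assms by (simp add: divdiff_set_insert)
qed

definition nonneg_divdiff_on :: "nat \<Rightarrow> real set \<Rightarrow> (real \<Rightarrow> real) \<Rightarrow> bool" where
  "nonneg_divdiff_on N S f \<longleftrightarrow> (\<forall>A \<subseteq> S. finite A \<longrightarrow> card A = N \<longrightarrow> 0 \<le> divdiff_set A f)"

lemma m_convex_iff_nonneg_divdiff_on: "m_convex m I f \<longleftrightarrow> nonneg_divdiff_on (m + 2) I f"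
proof
  assume convex: "m_convex m I f"
  show "nonneg_divdiff_on (m + 2) I f" unfolding nonneg_divdiff_on_def
  proof (intro allI impI)
    fix A assume A: "A \<subseteq> I" "finite A" "card A = m + 2"
    define xs where "xs = sorted_list_of_set A"
    have "distinct xs" "set xs = A" "length xs = m + 2"
      using A by (simp_all add: xs_def)
    then show "0 \<le> divdiff_set A f"
      using convex A(1) divdiff_eq_divdiff_set[of xs f] unfolding m_convex_def by force
  qed
next
  assume nonneg: "nonneg_divdiff_on (m + 2) I f"
  show "m_convex m I f" unfolding m_convex_def
  proof (intro allI impI)
    fix xs assume xs: "length xs = m + 2 \<and> distinct xs \<and> set xs \<subseteq> I"
    then have "card (set xs) = m + 2" "xs \<noteq> []" by (auto simp: distinct_card)
    then show "0 \<le> divdiff xs f"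
      using nonneg xs divdiff_eq_divdiff_set[of xs f] unfolding nonneg_divdiff_on_def by simp
  qed
qed

lemma nonneg_divdiff_on_difference_quotient:
  assumes "nonneg_divdiff_on (Suc N) S G" "c \<in> S" "1 \<le> N"
  shows "nonneg_divdiff_on N (S - {c}) (\<lambda>t. (G t - G c) / (t - c))"
  unfolding nonneg_divdiff_on_def
proof (intro allI impI)
  fix A assume A: "A \<subseteq> S - {c}" "finite A" "card A = N"
  then have "A \<noteq> {}" using assms(3) by auto
  then have "divdiff_set A (\<lambda>t. (G t - G c) / (t - c)) = divdiff_set (insert c A) G"
    using A by (intro divdiff_set_difference_quotient) auto
  moreover have "c \<notin> A" using A(1) by auto
  then have "insert c A \<subseteq> S" "card (insert c A) = Suc N"
    using A assms(2) by auto
  ultimately show "0 \<le> divdiff_set A (\<lambda>t. (G t - G c) / (t - c))"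
    using assms(1) A(2) unfolding nonneg_divdiff_on_def by simp
qed

lemma mono_divdiff_set_insert:
  assumes "nonneg_divdiff_on (card T + 2) S H" "finite T" "T \<subseteq> S"
    and "s \<in> S - T" "s' \<in> S - T" "s \<le> s'"
  shows "divdiff_set (insert s T) H \<le> divdiff_set (insert s' T) H"
proof (cases "s = s'")
  case False
  have "insert s (insert s' T) \<subseteq> S" "card (insert s (insert s' T)) = card T + 2"
    using assms False by auto
  then have "0 \<le> divdiff_set (insert s (insert s' T)) H"
    using assms(1,2) unfolding nonneg_divdiff_on_def by simp
  also have "\<dots> = (divdiff_set (insert s' T) H - divdiff_set (insert s T) H) / (s' - s)"
    using assms False by (intro divdiff_set_insert_insert) auto
  finally show ?thesis using assms(6) False by (simp add: zero_le_divide_iff)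
qed simp

lemma tendsto_divdiff_set_insert:
  assumes "finite T" "x \<notin> T" "(H \<longlongrightarrow> v) F" "((\<lambda>s. s) \<longlongrightarrow> x) F"
  shows "((\<lambda>s. divdiff_set (insert s T) H) \<longlongrightarrow> divdiff_set (insert x T) (H(x := v))) F"
proof -
  have "eventually (\<lambda>s. s \<in> - T) F"
    using assms by (intro topological_tendstoD[OF assms(4)]) (auto intro: finite_imp_closed)
  then have "eventually (\<lambda>s. H s / (\<Prod>t\<in>T. s - t) + divdiff_set T (\<lambda>t. H t / (t - s))
                             = divdiff_set (insert s T) H) F"
    by eventually_elim (simp add: divdiff_set_insert assms(1))
  moreover have "((\<lambda>s. H s / (\<Prod>t\<in>T. s - t) + divdiff_set T (\<lambda>t. H t / (t - s)))
                   \<longlongrightarrow> v / (\<Prod>t\<in>T. x - t) + divdiff_set T (\<lambda>t. H t / (t - x))) F"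
    using assms by (intro tendsto_intros tendsto_divdiff_set) (auto simp: prod_zero_iff)
  moreover have "divdiff_set T (\<lambda>t. H t / (t - x)) = divdiff_set T (\<lambda>t. (H(x := v)) t / (t - x))"
    using assms(2) by (intro divdiff_set_cong) auto
  ultimately show ?thesis
    using assms(1,2) by (simp add: divdiff_set_insert Lim_transform_eventually)
qed

lemma eventually_at_right_in_interior_insert:
  "x \<in> interior (insert x S) \<Longrightarrow> eventually (\<lambda>s. s \<in> S) (at_right x)"
  unfolding eventually_at_filter
  by (rule eventually_mono[OF eventually_nhds_in_open[OF open_interior]])
     (auto dest: interior_subset[THEN subsetD])

lemma nonneg_divdiff_on_insert_limit:
  assumes nonneg: "nonneg_divdiff_on N S H" and lim: "(H \<longlongrightarrow> v) (at_right x)"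
    and x: "x \<in> interior (insert x S)"
  shows "nonneg_divdiff_on N (insert x S) (H(x := v))"
  unfolding nonneg_divdiff_on_def
proof (intro allI impI)
  fix A assume A: "A \<subseteq> insert x S" "finite A" "card A = N"
  show "0 \<le> divdiff_set A (H(x := v))"
  proof (cases "x \<in> A")
    case False
    then have "divdiff_set A (H(x := v)) = divdiff_set A H" by (intro divdiff_set_cong) auto
    then show ?thesis using nonneg A False unfolding nonneg_divdiff_on_def by auto
  next
    case True
    define T where "T = A - {x}"
    have T: "finite T" "T \<subseteq> S" "x \<notin> T" "A = insert x T"
      using A True unfolding T_def by auto
    have "eventually (\<lambda>s. s \<in> - T) (at_right x)"
      using T(1,3) by (intro topological_tendstoD[OF tendsto_ident_at]) (auto intro: finite_imp_closed)
    then have "eventually (\<lambda>s. 0 \<le> divdiff_set (insert s T) H) (at_right x)"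
      using eventually_at_right_in_interior_insert[OF x]
    proof eventually_elim
      case (elim s)
      then have "insert s T \<subseteq> S" "card (insert s T) = N"
        using A T by (auto simp: card_insert_if)
      then show ?case using nonneg T(1) unfolding nonneg_divdiff_on_def by simp
    qed
    moreover have "((\<lambda>s. divdiff_set (insert s T) H) \<longlongrightarrow> divdiff_set A (H(x := v))) (at_right x)"
      unfolding T(4) using T(1,3) lim by (intro tendsto_divdiff_set_insert tendsto_ident_at)
    ultimately show ?thesis by (intro tendsto_lowerbound) auto
  qed
qed

lemma nonneg_divdiff_on_has_right_limit:
  assumes nonneg: "nonneg_divdiff_on N S H" and "2 \<le> N" and x: "x \<in> interior (insert x S)"
  shows "\<exists>v. (H \<longlongrightarrow> v) (at_right x)"
proof -
  obtain \<delta> where "\<delta> > 0" and \<delta>: "{x - \<delta><..<x + \<delta>} \<subseteq> insert x S"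
    using x by (auto simp: mem_interior ball_eq_greaterThanLessThan dest: interior_subset[THEN subsetD])
  obtain U where U: "finite U" "card U = N - 1" "U \<subseteq> {x - \<delta><..<x}"
    using infinite_arbitrarily_large[of "{x - \<delta><..<x}" "N - 1"] \<open>\<delta> > 0\<close> by auto
  then obtain s0 where "s0 \<in> U" using \<open>2 \<le> N\<close> by fastforce
  have "U \<subseteq> S" using U(3) \<delta> by force
  define T where "T = U - {s0}"
  have T: "finite T" "card T + 2 = N" "T \<subseteq> S"
    using U \<open>U \<subseteq> S\<close> \<open>s0 \<in> U\<close> \<open>2 \<le> N\<close> by (auto simp: T_def)
  have s0: "s0 \<in> S - T" "s0 < x" using U \<open>U \<subseteq> S\<close> \<open>s0 \<in> U\<close> by (auto simp: T_def)
  define I where "I = {x<..<x + \<delta>}"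
  have I: "I \<subseteq> S - T" using U(3) \<delta> by (force simp: I_def T_def)
  \<comment> \<open>\<phi> is monotone and bounded below by \<phi> s0 on I, so it has a right limit at x;
    solving \<open>divdiff_set_insert\<close> for H s transfers the limit to H.\<close>
  define \<phi> where "\<phi> s = divdiff_set (insert s T) H" for s
  have mono: "\<phi> s \<le> \<phi> s'" if "s \<in> S - T" "s' \<in> S - T" "s \<le> s'" for s s'
  proof -
    have "nonneg_divdiff_on (card T + 2) S H" using nonneg T(2) by simp
    then show ?thesis unfolding \<phi>_def using T(1,3) that by (rule mono_divdiff_set_insert)
  qed
  have "at x within I = at_right x"
    by (rule at_within_nhd[of _ "{x - \<delta><..<x + \<delta>}"]) (use \<open>\<delta> > 0\<close> in \<open>auto simp: I_def\<close>)
  moreover have "{x<..} \<inter> I = I" by (auto simp: I_def)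
  ultimately obtain L where lim_\<phi>: "(\<phi> \<longlongrightarrow> L) (at_right x)"
    using Lim_right_bound[of I x \<phi> "\<phi> s0"] mono I s0 by (metis less_le_trans subsetD less_imp_le)
  define w where "w s = (\<Prod>t\<in>T. s - t)" for s
  define r where "r s = divdiff_set T (\<lambda>t. H t / (t - s))" for s
  have "eventually (\<lambda>s. s \<in> I) (at_right x)"
    unfolding I_def using eventually_at_right_real[of x "x + \<delta>"] \<open>\<delta> > 0\<close> by simp
  then have "eventually (\<lambda>s. w s * (\<phi> s - r s) = H s) (at_right x)"
  proof eventually_elim
    case (elim s)
    then have "w s \<noteq> 0" "s \<notin> T" using I T(1) by (auto simp: w_def prod_zero_iff)
    then show ?case using T(1) by (simp add: \<phi>_def w_def r_def divdiff_set_insert)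
  qed
  moreover have "x \<notin> T" using U by (auto simp: T_def)
  then have "((\<lambda>s. w s * (\<phi> s - r s)) \<longlongrightarrow> w x * (L - r x)) (at_right x)"
    unfolding w_def r_def
    by (intro tendsto_intros lim_\<phi> tendsto_divdiff_set tendsto_ident_at) auto
  ultimately show ?thesis by (blast intro: Lim_transform_eventually)
qed

lemma nonneg_divdiff_on_double_node:
  assumes nonneg: "nonneg_divdiff_on (N + 2) S G" and "1 \<le> N" and x: "x \<in> interior S"
  obtains v K where "nonneg_divdiff_on N (S - {x}) K"
    and "\<And>t. t \<noteq> x \<Longrightarrow> G t = G x + (t - x) * (v + (t - x) * K t)"
proof -
  have "x \<in> S" using x interior_subset by blast
  then have S: "insert x (S - {x}) = S" by auto
  define H where "H t = (G t - G x) / (t - x)" for t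
  have H: "nonneg_divdiff_on (N + 1) (S - {x}) H"
    unfolding H_def using nonneg \<open>x \<in> S\<close> \<open>1 \<le> N\<close> by (intro nonneg_divdiff_on_difference_quotient) simp_all
  moreover have x': "x \<in> interior (insert x (S - {x}))" using x S by simp
  \<comment> \<open>v stands in for G' x, which need not exist.\<close>
  ultimately obtain v where "(H \<longlongrightarrow> v) (at_right x)"
    using nonneg_divdiff_on_has_right_limit[of "N + 1"] \<open>1 \<le> N\<close> by fastforce
  with H x' have "nonneg_divdiff_on (N + 1) S (H(x := v))"
    by (metis nonneg_divdiff_on_insert_limit S)
  then have "nonneg_divdiff_on N (S - {x}) (\<lambda>t. ((H(x := v)) t - v) / (t - x))"
    using \<open>x \<in> S\<close> \<open>1 \<le> N\<close> nonneg_divdiff_on_difference_quotient[of N S "H(x := v)" x] by simp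
  moreover have "G t = G x + (t - x) * (v + (t - x) * (((H(x := v)) t - v) / (t - x)))" if "t \<noteq> x" for t
    using that by (simp add: H_def)
  ultimately show ?thesis by (rule that)
qed

lemma nonneg_divdiff_on_touching_poly:
  assumes "nonneg_divdiff_on (2 * k + 1) S G" "finite X" "card X = k" "X \<subseteq> interior S"
  shows "\<exists>P. (P = 0 \<or> degree P < 2 * k) \<and> (\<forall>y\<in>X. poly P y = G y) \<and> (\<forall>t\<in>S. poly P t \<le> G t)"
  using assms
proof (induction k arbitrary: S G X)
  case 0
  have "0 \<le> G t" if "t \<in> S" for t
  proof -
    have "{t} \<subseteq> S" "finite {t}" "card {t} = 2 * 0 + 1" using that by auto
    then show ?thesis using 0(1) unfolding nonneg_divdiff_on_def by (metis divdiff_set_singleton)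
  qed
  then show ?case using 0 by (intro exI[of _ 0]) auto
next
  case (Suc k)
  then obtain x where "x \<in> X" by fastforce
  then have x: "x \<in> interior S" using Suc.prems(4) by blast
  have "nonneg_divdiff_on (2 * k + 1 + 2) S G" using Suc.prems(1) by simp
  then obtain v K where K: "nonneg_divdiff_on (2 * k + 1) (S - {x}) K"
    and G: "\<And>t. t \<noteq> x \<Longrightarrow> G t = G x + (t - x) * (v + (t - x) * K t)"
    by (rule nonneg_divdiff_on_double_node[OF _ _ x]) auto
  have "interior S - {x} \<subseteq> interior (S - {x})"
    by (intro interior_maximal open_Diff) (auto dest: interior_subset[THEN subsetD])
  then have "X - {x} \<subseteq> interior (S - {x})" using Suc.prems(4) by blast
  moreover have "finite (X - {x})" "card (X - {x}) = k" using Suc.prems(2,3) \<open>x \<in> X\<close> by auto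
  ultimately obtain R where R: "R = 0 \<or> degree R < 2 * k" "\<forall>y\<in>X - {x}. poly R y = K y"
      "\<forall>t\<in>S - {x}. poly R t \<le> K t"
    using Suc.IH[OF K] by blast
  define P where "P = [:G x:] + smult v [:-x, 1:] + [:-x, 1:]^2 * R"
  have P: "poly P t = G x + (t - x) * (v + (t - x) * poly R t)" for t
    by (simp add: P_def power2_eq_square algebra_simps)
  have "degree ([:-x, 1:]^2 * R) \<le> 2 * k + 1"
    using R(1) degree_mult_le[of "[:-x, 1:]^2" R] by (auto simp: degree_linear_power)
  then have "degree P \<le> 2 * k + 1"
    unfolding P_def by (intro degree_add_le) auto
  then have "degree P < 2 * Suc k" by simp
  moreover have "poly P y = G y" if "y \<in> X" for y
  proof (cases "y = x")
    case False
    then have "poly R y = K y" using R(2) that by blast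
    then show ?thesis using G[OF False] by (simp add: P)
  qed (simp add: P)
  moreover have "poly P t \<le> G t" if "t \<in> S" for t
  proof (cases "t = x")
    case False
    then have "poly R t \<le> K t" using R(3) that by blast
    moreover have "poly P t = G t - (t - x)^2 * (K t - poly R t)"
      using G[OF False] by (simp add: P power2_eq_square algebra_simps)
    ultimately show ?thesis by simp
  qed (simp add: P)
  ultimately show ?case by blast
qed

lemma nonneg_divdiff_on_poly_majorant:
  assumes "nonneg_divdiff_on (2 * n + 2) {a..b} f" "a < b"
    and "finite X" "card X = n" "X \<subseteq> {a<..<b}"
  shows "\<exists>p. degree p \<le> 2 * n \<and> poly p b = f b \<and> (\<forall>y\<in>X. poly p y = f y)
           \<and> (\<forall>t\<in>{a..b}. f t \<le> poly p t)"
proof -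
  define G where "G t = (f t - f b) / (t - b)" for t
  have "nonneg_divdiff_on (2 * n + 1) ({a..b} - {b}) G"
    unfolding G_def using assms(1,2) by (intro nonneg_divdiff_on_difference_quotient) simp_all
  moreover have "{a..b} - {b} = {a..<b}" by auto
  ultimately obtain P where P: "P = 0 \<or> degree P < 2 * n" "\<forall>y\<in>X. poly P y = G y"
      "\<forall>t\<in>{a..<b}. poly P t \<le> G t"
    using nonneg_divdiff_on_touching_poly[of n "{a..<b}" G X] assms(3-5) by auto
  define p where "p = [:f b:] + [:-b, 1:] * P"
  have p: "poly p t = f b + (t - b) * poly P t" for t by (simp add: p_def algebra_simps)
  have f: "f t = f b + (t - b) * G t" if "t \<noteq> b" for t using that by (simp add: G_def)
  have "degree p \<le> 2 * n"
    using P(1) degree_mult_le[of "[:-b, 1:]" P] unfolding p_def by (auto intro!: degree_add_le)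
  moreover have "poly p y = f y" if "y \<in> X" for y
    using that P(2) assms(5) p f[of y] by auto
  moreover have "f t \<le> poly p t" if "t \<in> {a..b}" for t
  proof (cases "t = b")
    case False
    then have "(t - b) * G t \<le> (t - b) * poly P t"
      using P(3) that by (intro mult_left_mono_neg) auto
    then show ?thesis using f[OF False] p by simp
  qed (simp add: p)
  ultimately show ?thesis using p[of b] by auto
qed

lemma finite_superset_with_card:
  assumes "infinite A" "finite B" "B \<subseteq> A" "card B \<le> n"
  obtains C where "finite C" "card C = n" "B \<subseteq> C" "C \<subseteq> A"
proof -
  obtain Y where Y: "finite Y" "card Y = n" "Y \<subseteq> A"
    using infinite_arbitrarily_large[OF assms(1)] by blast
  have fin: "finite (B \<union> Y)" using Y(1) assms(2) by simp
  then have "n \<le> card (B \<union> Y)" using card_mono[OF fin, of Y] Y(2) by simp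
  then obtain C where C: "B \<subseteq> C" "C \<subseteq> B \<union> Y" "card C = n"
    using exists_subset_between[OF assms(4) _ _ fin] by blast
  show ?thesis
  proof (rule that)
    show "finite C" using C(2) fin by (rule finite_subset)
    show "C \<subseteq> A" using C(2) Y(3) assms(3) by blast
  qed (use C in auto)
qed

theorem corollary5:
  fixes n :: nat and a b :: real and f :: "real \<Rightarrow> real" and x :: "nat \<Rightarrow> real"
  assumes "a < b"
    and "m_convex (2 * n) {a..b} f"
    and "\<forall>i\<in>{1..n}. x i \<in> {a<..<b}"
    and "x (n + 1) = b"
  shows "\<exists>p :: real poly. degree p \<le> 2 * n
           \<and> (\<forall>i\<in>{1..n+1}. poly p (x i) = f (x i))
           \<and> (\<forall>t\<in>{a..b}. poly p t \<ge> f t)"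
proof -
  have "x ` {1..n} \<subseteq> {a<..<b}" "card (x ` {1..n}) \<le> n"
    using assms(3) card_image_le[of "{1..n}" x] by auto
  then obtain X where X: "finite X" "card X = n" "x ` {1..n} \<subseteq> X" "X \<subseteq> {a<..<b}"
    by (rule finite_superset_with_card[OF infinite_Ioo[OF assms(1)] finite_imageI[OF finite_atLeastAtMost]])
  have "nonneg_divdiff_on (2 * n + 2) {a..b} f"
    using assms(2) by (simp add: m_convex_iff_nonneg_divdiff_on)
  then obtain p where p: "degree p \<le> 2 * n" "poly p b = f b" "\<forall>y\<in>X. poly p y = f y"
      "\<forall>t\<in>{a..b}. f t \<le> poly p t"
    using nonneg_divdiff_on_poly_majorant[OF _ assms(1) X(1,2,4)] by blast
  moreover have "poly p (x i) = f (x i)" if "i \<in> {1..n+1}" for i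
  proof (cases "i = n + 1")
    case False
    then have "x i \<in> X" using that X(3) by fastforce
    then show ?thesis using p(3) by blast
  qed (use p(2) assms(4) in simp)
  ultimately show ?thesis by auto
qed

end
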